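(* Let $N\ge\kappa\ge1$ be integers and let $\mathbf a_1,\dots,\mathbf a_N\in\mathbb R^{\kappa}$ be such that every collection of at most $\kappa$ of them is linearly independent. Let $\mathbf A$ be the block matrix $\mathbf A=[\mathbf A_{m,n}]_{m,n=1}^N\in\mathbb R^{N\kappa\times(N\kappa-\kappa(\kappa-1)/2)}$, where $\mathbf A_{m,n}\in\mathbb R^{\kappa\times\min\{\kappa,N-n+1\}}$ has $q$-th column ($1\le q\le\min\{\kappa,N-n+1\}$) $$\mathbf A_{m,n}(:,q)=\begin{cases}\mathbf a_{q+n-1}, & m=n,\\ \mathbf a_n, & m=q+n-1\ (\text{and } m\ne n),\\ \mathbf 0, & \text{otherwise}.\end{cases}$$ Then $\operatorname{rank}(\mathbf A)=N\kappa-\frac{\kappa(\kappa-1)}{2}$.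
   Context: $\mathbf A$ is the coefficient matrix of the linear system in the variables $B_{n,m}$, $n\le m\le \min\{n+\kappa-1,N\}$, obtained by writing $\mathbf B\mathbf M=\boldsymbol\Gamma$ row by row for a real symmetric band matrix $\mathbf B$ of band width $\kappa-1$, where $\mathbf M$ has rows $\mathbf a_n^T$; the column of $\mathbf A$ indexed by block $n$ and position $q$ corresponds to the variable $B_{n,n+q-1}$. *)

theory Defs
  imports "Jordan_Normal_Form.DL_Rank"
begin

text \<open>0-based indexing throughout: vectors a j (j < N) in R^kappa, given as
  coordinate functions a j i (i < kappa).\<close>

definition small_sets_indep :: "nat \<Rightarrow> nat \<Rightarrow> (nat \<Rightarrow> nat \<Rightarrow> real) \<Rightarrow> bool" where
  "small_sets_indep N \<kappa> a \<longleftrightarrow>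
     (\<forall>S. S \<subseteq> {0..<N} \<and> card S \<le> \<kappa> \<longrightarrow>
        (\<forall>c :: nat \<Rightarrow> real. (\<forall>i<\<kappa>. (\<Sum>j\<in>S. c j * a j i) = 0) \<longrightarrow> (\<forall>j\<in>S. c j = 0)))"

definition col_labels :: "nat \<Rightarrow> nat \<Rightarrow> (nat \<times> nat) list" where
  "col_labels N \<kappa> = concat (map (\<lambda>n. map (\<lambda>q. (n, q)) [0..<min \<kappa> (N - n)]) [0..<N])"

text \<open>Entry of block A_{m,n}, row i, column q (all 0-based).\<close>
definition A_entry :: "nat \<Rightarrow> (nat \<Rightarrow> nat \<Rightarrow> real) \<Rightarrow> nat \<Rightarrow> nat \<Rightarrow> nat \<Rightarrow> nat \<Rightarrow> real" where
  "A_entry \<kappa> a m i n q =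
     (if m = n then a (q + n) i else if m = q + n then a n i else 0)"

definition A_mat :: "nat \<Rightarrow> nat \<Rightarrow> (nat \<Rightarrow> nat \<Rightarrow> real) \<Rightarrow> real mat" where
  "A_mat N \<kappa> a = mat (N * \<kappa>) (length (col_labels N \<kappa>))
     (\<lambda>(r, c). case col_labels N \<kappa> ! c of (n, q) \<Rightarrow> A_entry \<kappa> a (r div \<kappa>) (r mod \<kappa>) n q)"

end

theory Submission
  imports Defs
begin

text \<open>The columns of the matrix are linearly independent, so its rank is its number
  of columns; block n contributes min kappa (N - n) of them, and the blocks that fall
  short of kappa miss 0 + 1 + ... + (kappa - 1) columns in total.  Independence is
  forward substitution over the blocks: row block m sees the diagonal block, with
  columns a m, ..., a (m + K - 1) (K at most kappa), and off-diagonal entries only from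
  columns of earlier blocks.  Once the coefficients of the earlier blocks are known to
  vanish, the row block equation becomes a vanishing combination of at most kappa
  consecutive vectors a j, so the coefficients of block m vanish as well.\<close>

lemma (in vec_space) rank_eq_dim_col_if_kernel_trivial:
  assumes A: "A \<in> carrier_mat n nc"
    and kernel: "\<And>v. v \<in> carrier_vec nc \<Longrightarrow> A *\<^sub>v v = 0\<^sub>v n \<Longrightarrow> v = 0\<^sub>v nc"
  shows "rank A = nc"
proof -
  have mult_unit: "A *\<^sub>v unit_vec nc j = col A j" if "j < nc" for j
    by (rule eq_vecI) (use A that in auto)
  have "inj_on (col A) {..<nc}"
  proof (rule inj_onI)
    fix i j assume "i \<in> {..<nc}" "j \<in> {..<nc}" and "col A i = col A j"
    then have "A *\<^sub>v (unit_vec nc i - unit_vec nc j) = 0\<^sub>v n"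
      using A by (simp add: mult_minus_distrib_mat_vec mult_unit)
    then have "unit_vec nc i - unit_vec nc j = (0\<^sub>v nc :: 'a vec)"
      by (intro kernel) simp_all
    then have "(unit_vec nc i - unit_vec nc j) $ i = (0 :: 'a)"
      using \<open>i \<in> {..<nc}\<close> by simp
    then show "i = j" using \<open>i \<in> {..<nc}\<close> \<open>j \<in> {..<nc}\<close> by (auto split: if_splits)
  qed
  then have distinct: "distinct (cols A)"
    using A by (simp add: cols_def distinct_map atLeast0LessThan)
  have "lin_indpt (set (cols A))"
  proof
    assume "lin_dep (set (cols A))"
    then obtain v where "v \<in> carrier_vec nc" "v \<noteq> 0\<^sub>v nc" "A *\<^sub>v v = 0\<^sub>v n"
      using lin_depE[OF A _ distinct] by blast
    then show False using kernel by blast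
  qed
  then show ?thesis by (rule lin_indpt_full_rank[OF A distinct])
qed

lemma sum_nth_distinct:
  assumes "distinct xs"
  shows "(\<Sum>c<length xs. g (xs ! c) c) = (\<Sum>p\<in>set xs. g p (find_first p xs))"
proof (rule sum.reindex_bij_witness[of _ "\<lambda>p. find_first p xs" "nth xs"])
  fix c assume "c \<in> {..<length xs}"
  then show "find_first (xs ! c) xs = c" "xs ! c \<in> set xs"
    "g (xs ! c) (find_first (xs ! c) xs) = g (xs ! c) c"
    using assms by (simp_all add: find_first_unique)
next
  fix p assume "p \<in> set xs"
  then show "xs ! find_first p xs = p" "find_first p xs \<in> {..<length xs}"
    by (simp_all add: nth_find_first find_first_le)
qed

lemma block_row_less:
  fixes m i N \<kappa> :: nat
  assumes "m < N" "i < \<kappa>"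
  shows "m * \<kappa> + i < N * \<kappa>"
proof -
  have "m * \<kappa> + i < Suc m * \<kappa>" using \<open>i < \<kappa>\<close> by simp
  also have "\<dots> \<le> N * \<kappa>" using \<open>m < N\<close> by (intro mult_le_mono1) simp
  finally show ?thesis .
qed

lemma set_col_labels: "set (col_labels N \<kappa>) = {(n, q). n < N \<and> q < min \<kappa> (N - n)}"
  by (auto simp: col_labels_def)

lemma distinct_col_labels: "distinct (col_labels N \<kappa>)"
proof -
  have pairs: "distinct (concat (map (\<lambda>n. map (Pair n) (qs n)) ns))"
    if "distinct ns" and "\<And>n. distinct (qs n)" for ns qs
    using that by (induction ns) (auto simp: distinct_map inj_on_def)
  show ?thesis unfolding col_labels_def by (rule pairs) simp_all
qed

lemma sum_min_diff_eq:
  fixes \<kappa> N :: nat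
  assumes "\<kappa> \<le> N"
  shows "(\<Sum>n<N. min \<kappa> (N - n)) = N * \<kappa> - \<kappa> * (\<kappa> - 1) div 2"
proof -
  have "(\<Sum>n<N. \<kappa> - (N - n)) = (\<Sum>i<N. \<kappa> - (N - (N - Suc i)))"
    by (rule sum.nat_diff_reindex[symmetric])
  also have "\<dots> = (\<Sum>i<N. \<kappa> - Suc i)"
    by (intro sum.cong) auto
  also have "\<dots> = (\<Sum>i<\<kappa>. \<kappa> - Suc i)"
    using assms by (intro sum.mono_neutral_right) auto
  also have "\<dots> = (\<Sum>i<\<kappa>. i)"
    by (rule sum.nat_diff_reindex)
  also have "\<dots> = \<kappa> * (\<kappa> - 1) div 2"
    using Sum_Ico_nat[of 0 \<kappa>] by (simp add: atLeast0LessThan)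
  finally have missing: "(\<Sum>n<N. \<kappa> - (N - n)) = \<kappa> * (\<kappa> - 1) div 2" .
  have "(\<Sum>n<N. min \<kappa> (N - n)) + (\<Sum>n<N. \<kappa> - (N - n)) = (\<Sum>n<N. \<kappa>)"
    by (subst sum.distrib[symmetric]) (rule sum.cong; simp)
  then show ?thesis using missing by simp
qed

lemma length_col_labels:
  assumes "\<kappa> \<le> N"
  shows "length (col_labels N \<kappa>) = N * \<kappa> - \<kappa> * (\<kappa> - 1) div 2"
proof -
  have "length (col_labels N \<kappa>) = (\<Sum>n<N. min \<kappa> (N - n))"
    by (simp add: col_labels_def length_concat comp_def sum_list_sum_nth atLeast0LessThan)
  then show ?thesis using sum_min_diff_eq[OF assms] by simp
qed

lemma small_sets_indep_consecutive:
  assumes indep: "small_sets_indep N \<kappa> a" and "K \<le> \<kappa>" "m + K \<le> N"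
    and comb: "\<And>i. i < \<kappa> \<Longrightarrow> (\<Sum>q<K. c q * a (q + m) i) = 0"
    and "q < K"
  shows "c q = 0"
proof -
  let ?S = "(\<lambda>q. q + m) ` {..<K}"
  have inj: "inj_on (\<lambda>q. q + m) {..<K}" by (simp add: inj_on_def)
  have "?S \<subseteq> {0..<N}" using \<open>m + K \<le> N\<close> by auto
  moreover have "card ?S \<le> \<kappa>" using \<open>K \<le> \<kappa>\<close> by (simp add: card_image[OF inj])
  moreover have "(\<Sum>j\<in>?S. c (j - m) * a j i) = 0" if "i < \<kappa>" for i
    using comb[OF that] by (simp add: sum.reindex[OF inj])
  ultimately have "\<forall>j\<in>?S. c (j - m) = 0"
    using indep[unfolded small_sets_indep_def, rule_format, of ?S "\<lambda>j. c (j - m)"] by blast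
  then show ?thesis using \<open>q < K\<close> by auto
qed

lemma A_row_sum_eq_diagonal_block:
  assumes "m < N" and upper_zero: "\<And>n q. n < m \<Longrightarrow> q < min \<kappa> (N - n) \<Longrightarrow> x (n, q) = 0"
  shows "(\<Sum>(n, q)\<in>set (col_labels N \<kappa>). A_entry \<kappa> a m i n q * x (n, q))
       = (\<Sum>q<min \<kappa> (N - m). x (m, q) * a (q + m) i)"
    (is "?lhs = ?rhs")
proof -
  have "?lhs = (\<Sum>(n, q)\<in>Pair m ` {..<min \<kappa> (N - m)}. A_entry \<kappa> a m i n q * x (n, q))"
  proof (rule sum.mono_neutral_right)
    show "Pair m ` {..<min \<kappa> (N - m)} \<subseteq> set (col_labels N \<kappa>)"
      using \<open>m < N\<close> by (auto simp: set_col_labels)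
    show "\<forall>p\<in>set (col_labels N \<kappa>) - Pair m ` {..<min \<kappa> (N - m)}.
            (case p of (n, q) \<Rightarrow> A_entry \<kappa> a m i n q * x (n, q)) = 0"
    proof (clarify)
      fix n q assume "(n, q) \<in> set (col_labels N \<kappa>)" "(n, q) \<notin> Pair m ` {..<min \<kappa> (N - m)}"
      then have "n \<noteq> m" and "q < min \<kappa> (N - n)" by (auto simp: set_col_labels)
      then show "A_entry \<kappa> a m i n q * x (n, q) = 0"
        using upper_zero[of n q] by (auto simp: A_entry_def)
    qed
  qed simp
  also have "\<dots> = ?rhs"
    by (simp add: sum.reindex inj_on_def A_entry_def mult.commute)
  finally show ?thesis .
qed

lemma A_system_solution_zero:
  assumes indep: "small_sets_indep N \<kappa> a"
    and sol: "\<And>m i. m < N \<Longrightarrow> i < \<kappa> \<Longrightarrow>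
      (\<Sum>(n, q)\<in>set (col_labels N \<kappa>). A_entry \<kappa> a m i n q * x (n, q)) = 0"
    and "p \<in> set (col_labels N \<kappa>)"
  shows "x p = 0"
proof -
  have "\<forall>q < min \<kappa> (N - m). x (m, q) = 0" if "m < N" for m
    using that
  proof (induction m rule: less_induct)
    case (less m)
    have rows: "(\<Sum>q<min \<kappa> (N - m). x (m, q) * a (q + m) i) = 0" if "i < \<kappa>" for i
    proof -
      have "(\<Sum>(n, q)\<in>set (col_labels N \<kappa>). A_entry \<kappa> a m i n q * x (n, q))
          = (\<Sum>q<min \<kappa> (N - m). x (m, q) * a (q + m) i)"
        by (rule A_row_sum_eq_diagonal_block[OF less.prems]) (use less.IH less.prems in auto)
      then show ?thesis using sol[OF less.prems that] by simp
    qed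
    show ?case
    proof (intro allI impI)
      fix q assume q: "q < min \<kappa> (N - m)"
      show "x (m, q) = 0"
        by (rule small_sets_indep_consecutive[OF indep _ _ rows q]) (use less.prems in auto)
    qed
  qed
  then show ?thesis using assms(3) by (auto simp: set_col_labels)
qed

lemma A_mat_carrier: "A_mat N \<kappa> a \<in> carrier_mat (N * \<kappa>) (length (col_labels N \<kappa>))"
  by (simp add: A_mat_def)

lemma mult_A_mat_vec_index:
  assumes v: "v \<in> carrier_vec (length (col_labels N \<kappa>))" and "m < N" "i < \<kappa>"
  shows "(A_mat N \<kappa> a *\<^sub>v v) $ (m * \<kappa> + i)
       = (\<Sum>(n, q)\<in>set (col_labels N \<kappa>). A_entry \<kappa> a m i n q * v $ find_first (n, q) (col_labels N \<kappa>))"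
proof -
  let ?L = "col_labels N \<kappa>"
  have row: "m * \<kappa> + i < N * \<kappa>" using assms(2,3) by (rule block_row_less)
  have "(A_mat N \<kappa> a *\<^sub>v v) $ (m * \<kappa> + i) = (\<Sum>c<length ?L. case_prod (A_entry \<kappa> a m i) (?L ! c) * v $ c)"
    using row v \<open>i < \<kappa>\<close> by (simp add: A_mat_def scalar_prod_def atLeast0LessThan)
  also have "\<dots> = (\<Sum>p\<in>set ?L. case_prod (A_entry \<kappa> a m i) p * v $ find_first p ?L)"
    by (rule sum_nth_distinct[OF distinct_col_labels])
  finally show ?thesis by (simp add: case_prod_beta)
qed

lemma A_mat_kernel_trivial:
  assumes indep: "small_sets_indep N \<kappa> a"
    and v: "v \<in> carrier_vec (length (col_labels N \<kappa>))"
    and null: "A_mat N \<kappa> a *\<^sub>v v = 0\<^sub>v (N * \<kappa>)"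
  shows "v = 0\<^sub>v (length (col_labels N \<kappa>))"
proof -
  let ?L = "col_labels N \<kappa>"
  have zero: "v $ find_first p ?L = 0" if "p \<in> set ?L" for p
  proof (rule A_system_solution_zero[OF indep _ that, where x = "\<lambda>p. v $ find_first p ?L"])
    fix m i assume "m < N" "i < \<kappa>"
    then have "(A_mat N \<kappa> a *\<^sub>v v) $ (m * \<kappa> + i) = 0"
      using null block_row_less by simp
    then show "(\<Sum>(n, q)\<in>set ?L. A_entry \<kappa> a m i n q * v $ find_first (n, q) ?L) = 0"
      using mult_A_mat_vec_index[OF v \<open>m < N\<close> \<open>i < \<kappa>\<close>] by simp
  qed
  show ?thesis
  proof (rule eq_vecI)
    fix c assume "c < dim_vec (0\<^sub>v (length ?L) :: real vec)"
    then have c: "c < length ?L" by simp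
    then have "v $ c = v $ find_first (?L ! c) ?L"
      by (simp add: find_first_unique[OF distinct_col_labels])
    also have "\<dots> = 0" using c by (intro zero) simp
    finally show "v $ c = 0\<^sub>v (length ?L) $ c" using c by simp
  qed (use v in simp)
qed


theorem lemma2:
  fixes N \<kappa> :: nat and a :: "nat \<Rightarrow> nat \<Rightarrow> real"
  assumes "1 \<le> \<kappa>" and "\<kappa> \<le> N"
    and "small_sets_indep N \<kappa> a"
  shows "vec_space.rank (N * \<kappa>) (A_mat N \<kappa> a) = N * \<kappa> - \<kappa> * (\<kappa> - 1) div 2"
proof -
  interpret vec_space "TYPE(real)" "N * \<kappa>" .
  have "rank (A_mat N \<kappa> a) = length (col_labels N \<kappa>)"
    by (rule rank_eq_dim_col_if_kernel_trivial[OF A_mat_carrier A_mat_kernel_trivial[OF assms(3)]])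
  then show ?thesis using length_col_labels[OF assms(2)] by simp
qed

end
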